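(* Let $\varepsilon,\delta>0$, $k\in\mathbb N$, let $\mathcal A$ and $\mathcal B$ be distributions over domains $X_A$ and $X_B$ respectively, and let $f:X_A\times X_B\to[0,1]$. Suppose there exists a coupling of $a_1,\dots,a_k$ i.i.d. from $\mathcal A$ and $b_1,\dots,b_k$ i.i.d. from $\mathcal B$ for which $$\Pr\!\left[\sum_{i\in[k]}f(a_i,b_i)\ge\varepsilon k+\sqrt{2k\ln(1/\delta)}\right]\ge\delta.$$ Then there is a coupling of $a\sim\mathcal A$ and $b\sim\mathcal B$ for which $\mathbb E[f(a,b)]\ge\varepsilon$.
   Context: A coupling of two (joint) distributions is a joint distribution on the product space whose marginals are the given distributions; here the $a_i$ are jointly i.i.d. from $\mathcal A$ and the $b_i$ are jointly i.i.d. from $\mathcal B$, with arbitrary dependence between the two families. *)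

theory Defs
  imports "HOL-Probability.Probability"
begin

definition is_coupling :: "('a \<times> 'b) pmf \<Rightarrow> 'a pmf \<Rightarrow> 'b pmf \<Rightarrow> bool" where
  "is_coupling \<mu> P Q \<longleftrightarrow> map_pmf fst \<mu> = P \<and> map_pmf snd \<mu> = Q"

end

theory Submission
  imports Defs
begin

(*
  Suppose every coupling of A and B gives E f < \<epsilon>. An optimal coupling \<pi> exists: couplings are
  sequentially compact for pointwise convergence of mass functions, since the tightness of the
  marginals keeps mass from escaping. The support of \<pi> is f-cyclically monotone, for otherwise
  moving a little mass around a cycle would improve \<pi>; Rockafellar's construction and two
  conjugations then give Kantorovich potentials G, H with f a b \<le> G a + H b, each of oscillation
  at most 1, and E\<^sub>A G + E\<^sub>B H \<le> E\<^sub>\<pi> f < \<epsilon>.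

  So under any coupling of the product distributions, \<Sum> f (a\<^sub>i, b\<^sub>i) is dominated by
  \<Sum> G a\<^sub>i + \<Sum> H b\<^sub>i, two sums of i.i.d. variables with range 1 whose moment generating functions
  Hoeffding's lemma controls. As exp (x + y) \<le> (exp (2x) + exp (2y)) / 2, the two sums need not be
  independent, and Chernoff's bound with threshold k (E\<^sub>A G + E\<^sub>B H) + T, T > sqrt (2 k ln (1/\<delta>)),
  gives probability at most exp (-T\<^sup>2 / 2k) < \<delta>.
*)

(* Summability is meant in the sense of infsetsum (Infinite_Set_Sum), not Infinite_Sum. *)
no_notation Infinite_Sum.abs_summable_on (infixr \<open>abs'_summable'_on\<close> 46)

lemma pmf_map_fst_eq_infsetsum:
  "pmf (map_pmf fst p) a = infsetsum (\<lambda>b. pmf p (a, b)) UNIV"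
proof -
  have fiber: "fst -` {a} = range (Pair a)" by auto
  have "pmf (map_pmf fst p) a = infsetsum (pmf p) (range (Pair a))"
    unfolding pmf_map measure_pmf_conv_infsetsum fiber ..
  also have "\<dots> = infsetsum (\<lambda>b. pmf p (a, b)) UNIV"
    by (rule infsetsum_reindex) (auto simp: inj_on_def)
  finally show ?thesis .
qed

lemma abs_summable_pmf_Pair_left: "(\<lambda>b. pmf p (a, b)) abs_summable_on UNIV"
  using abs_summable_on_reindex_iff[of "Pair a" UNIV "pmf p"] by (auto simp: inj_on_def)

lemma pmf_swap: "pmf (map_pmf prod.swap p) (b, a) = pmf p (a, b)"
  using pmf_map_inj'[of prod.swap p "(a, b)"] by simp

lemma pmf_map_snd_eq_infsetsum:
  "pmf (map_pmf snd p) b = infsetsum (\<lambda>a. pmf p (a, b)) UNIV"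
proof -
  have "map_pmf snd p = map_pmf fst (map_pmf prod.swap p)" by (simp add: pmf.map_comp o_def)
  then show ?thesis by (simp add: pmf_map_fst_eq_infsetsum pmf_swap)
qed

lemma abs_summable_pmf_Pair_right: "(\<lambda>a. pmf p (a, b)) abs_summable_on UNIV"
  using abs_summable_pmf_Pair_left[of "map_pmf prod.swap p" b] by (simp add: pmf_swap)

lemma pmf_eq_if_pmf_le:
  assumes "\<And>x. pmf p x \<le> pmf q x"
  shows "p = q"
proof (rule pmf_eqI, rule antisym)
  fix x
  show "pmf p x \<le> pmf q x" by (rule assms)
  have "measure_pmf.prob p (- {x}) \<le> measure_pmf.prob q (- {x})"
    unfolding measure_pmf_conv_infsetsum by (intro infsetsum_mono pmf_abs_summable assms)
  moreover have "measure_pmf.prob r (- {x}) = 1 - pmf r x" for r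
    using measure_pmf.prob_compl[of "{x}" r] by (simp add: Compl_eq_Diff_UNIV measure_pmf_single)
  ultimately show "pmf q x \<le> pmf p x" by simp
qed

lemma infsetsum_le_if_finite_sums_le:
  fixes g :: "'c \<Rightarrow> real"
  assumes nonneg: "\<And>x. g x \<ge> 0" and le: "\<And>X. finite X \<Longrightarrow> sum g X \<le> c"
  shows "g abs_summable_on UNIV" "infsetsum g UNIV \<le> c"
proof -
  show summable: "g abs_summable_on UNIV"
    by (rule abs_summable_finite_sumsI[where B = c]) (simp add: nonneg le)
  have "ereal (infsetsum g UNIV) = (SUP X\<in>{X. finite X \<and> X \<subseteq> UNIV}. ereal (sum g X))"
    by (rule infsetsum_nonneg_is_SUPREMUM_ereal[OF summable]) (simp add: nonneg)
  also have "\<dots> \<le> ereal c" by (rule SUP_least) (simp add: le)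
  finally show "infsetsum g UNIV \<le> c" by simp
qed

lemma infsetsum_le_of_pointwise_limit:
  fixes g :: "nat \<Rightarrow> 'c \<Rightarrow> real"
  assumes lim: "\<And>x. (\<lambda>n. g n x) \<longlonglongrightarrow> h x"
    and nonneg: "\<And>n x. g n x \<ge> 0"
    and summable: "\<And>n. g n abs_summable_on UNIV"
    and bound: "\<And>n. infsetsum (g n) UNIV \<le> c n" and "c \<longlonglongrightarrow> C"
  shows "h abs_summable_on UNIV" "infsetsum h UNIV \<le> C"
proof -
  have "sum h X \<le> C" if "finite X" for X
  proof (rule LIMSEQ_le[OF tendsto_sum[OF lim] \<open>c \<longlonglongrightarrow> C\<close>], intro exI allI impI)
    fix n
    have "sum (g n) X = infsetsum (g n) X" using that by simp
    also have "\<dots> \<le> infsetsum (g n) UNIV"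
      by (rule infsetsum_mono_neutral_left) (use summable nonneg that in auto)
    finally show "sum (g n) X \<le> c n" using bound[of n] by simp
  qed
  moreover have "h x \<ge> 0" for x by (rule LIMSEQ_le_const[OF lim]) (simp add: nonneg)
  ultimately show "h abs_summable_on UNIV" "infsetsum h UNIV \<le> C"
    using infsetsum_le_if_finite_sums_le[of h C] by auto
qed

lemma exists_finite_prob_compl_less:
  assumes "\<eta> > 0"
  shows "\<exists>S. finite S \<and> measure_pmf.prob p (- S) < \<eta>"
proof -
  have "(SUP X\<in>{X. finite X \<and> X \<subseteq> UNIV}. ereal (sum (pmf p) X)) = ereal (infsetsum (pmf p) UNIV)"
    by (rule infsetsum_nonneg_is_SUPREMUM_ereal[symmetric]) auto
  also have "\<dots> > ereal (1 - \<eta>)" using assms by (simp add: infsetsum_pmf_eq_1)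
  finally obtain S where S: "finite S" "1 - \<eta> < sum (pmf p) S"
    by (subst (asm) less_SUP_iff) auto
  have "measure_pmf.prob p (- S) = 1 - measure_pmf.prob p S"
    using measure_pmf.prob_compl[of S p] by (simp add: Compl_eq_Diff_UNIV)
  then show ?thesis using S by (auto simp: measure_measure_pmf_finite)
qed

lemma coupling_prob_Times_ge:
  assumes "is_coupling \<nu> A B"
  shows "measure_pmf.prob \<nu> (S \<times> T) \<ge> 1 - measure_pmf.prob A (- S) - measure_pmf.prob B (- T)"
proof -
  have "measure_pmf.prob \<nu> (- (S \<times> T)) \<le> measure_pmf.prob \<nu> (fst -` (- S) \<union> snd -` (- T))"
    by (rule measure_pmf.finite_measure_mono) auto
  also have "\<dots> \<le> measure_pmf.prob \<nu> (fst -` (- S)) + measure_pmf.prob \<nu> (snd -` (- T))"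
    by (rule measure_Un_le) auto
  also have "\<dots> = measure_pmf.prob A (- S) + measure_pmf.prob B (- T)"
    using assms by (auto simp: is_coupling_def)
  finally show ?thesis
    using measure_pmf.prob_compl[of "S \<times> T" \<nu>] by (simp add: Compl_eq_Diff_UNIV)
qed

lemma pointwise_limit_of_couplings_total:
  assumes coupling: "\<And>n. is_coupling (\<rho> n) A B"
    and lim: "\<And>x. (\<lambda>n. pmf (\<rho> n) x) \<longlonglongrightarrow> p x"
  shows "p abs_summable_on UNIV" and "infsetsum p UNIV = 1"
proof -
  have nonneg: "p x \<ge> 0" for x by (rule LIMSEQ_le_const[OF lim]) simp
  show summable: "p abs_summable_on UNIV"
    using infsetsum_le_of_pointwise_limit(1)[where g = "\<lambda>n. pmf (\<rho> n)" and h = p and c = "\<lambda>_. 1" and C = 1] lim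
    by (simp add: pmf_abs_summable infsetsum_pmf_eq_1)
  have "infsetsum p UNIV \<le> 1"
    using infsetsum_le_of_pointwise_limit(2)[where g = "\<lambda>n. pmf (\<rho> n)" and h = p and c = "\<lambda>_. 1" and C = 1] lim
    by (simp add: pmf_abs_summable infsetsum_pmf_eq_1)
  moreover have "1 \<le> infsetsum p UNIV"
  proof (rule field_le_epsilon)
    fix e :: real
    assume "e > 0"
    obtain S T where S: "finite S" "measure_pmf.prob A (- S) < e / 2"
      and T: "finite T" "measure_pmf.prob B (- T) < e / 2"
      using exists_finite_prob_compl_less[of "e / 2"] \<open>e > 0\<close> by (meson half_gt_zero)
    have "(\<lambda>n. measure_pmf.prob (\<rho> n) (S \<times> T)) \<longlonglongrightarrow> sum p (S \<times> T)"
      using S T by (simp add: measure_measure_pmf_finite tendsto_sum lim)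
    then have "1 - measure_pmf.prob A (- S) - measure_pmf.prob B (- T) \<le> sum p (S \<times> T)"
      by (rule LIMSEQ_le_const) (use coupling_prob_Times_ge[OF coupling] in auto)
    also have "\<dots> \<le> infsetsum p UNIV"
      using infsetsum_mono_neutral_left[OF _ summable, of p "S \<times> T"] S T nonneg by simp
    finally show "1 \<le> infsetsum p UNIV + e" using S T by linarith
  qed
  ultimately show "infsetsum p UNIV = 1" by linarith
qed

lemma coupling_of_pointwise_limit:
  assumes coupling: "\<And>n. is_coupling (\<rho> n) A B"
    and lim: "\<And>x. (\<lambda>n. pmf (\<rho> n) x) \<longlonglongrightarrow> p x"
  shows "\<exists>\<pi>. is_coupling \<pi> A B \<and> (\<forall>x. pmf \<pi> x = p x)"
proof -
  define \<pi> where "\<pi> = embed_pmf p"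
  have "p x \<ge> 0" for x by (rule LIMSEQ_le_const[OF lim]) simp
  then have pmf_\<pi>: "pmf \<pi> x = p x" for x
    unfolding \<pi>_def using pointwise_limit_of_couplings_total[OF coupling lim]
    by (intro pmf_embed_pmf) (simp_all add: nn_integral_conv_infsetsum)
  have "map_pmf fst \<pi> = A"
  proof (rule pmf_eq_if_pmf_le)
    fix a
    have row: "infsetsum (\<lambda>b. pmf (\<rho> n) (a, b)) UNIV = pmf A a" for n
      using pmf_map_fst_eq_infsetsum[of "\<rho> n" a] coupling[of n] by (simp add: is_coupling_def)
    show "pmf (map_pmf fst \<pi>) a \<le> pmf A a"
      unfolding pmf_map_fst_eq_infsetsum pmf_\<pi>
      by (rule infsetsum_le_of_pointwise_limit(2)[where g = "\<lambda>n b. pmf (\<rho> n) (a, b)" and h = "\<lambda>b. p (a, b)"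
            and c = "\<lambda>_. pmf A a"])
        (simp_all add: lim abs_summable_pmf_Pair_left row)
  qed
  moreover have "map_pmf snd \<pi> = B"
  proof (rule pmf_eq_if_pmf_le)
    fix b
    have column: "infsetsum (\<lambda>a. pmf (\<rho> n) (a, b)) UNIV = pmf B b" for n
      using pmf_map_snd_eq_infsetsum[of "\<rho> n" b] coupling[of n] by (simp add: is_coupling_def)
    show "pmf (map_pmf snd \<pi>) b \<le> pmf B b"
      unfolding pmf_map_snd_eq_infsetsum pmf_\<pi>
      by (rule infsetsum_le_of_pointwise_limit(2)[where g = "\<lambda>n a. pmf (\<rho> n) (a, b)" and h = "\<lambda>a. p (a, b)"
            and c = "\<lambda>_. pmf B b"])
        (simp_all add: lim abs_summable_pmf_Pair_right column)
  qed
  ultimately show ?thesis using pmf_\<pi> by (auto simp: is_coupling_def)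
qed

lemma unit_sequence_pointwise_convergent_subseq:
  fixes u :: "nat \<Rightarrow> 'c \<Rightarrow> real"
  assumes "countable D" and bounds: "\<And>n x. 0 \<le> u n x \<and> u n x \<le> 1"
  shows "\<exists>r l. strict_mono r \<and> (\<forall>x\<in>D. (\<lambda>n. u (r n) x) \<longlonglongrightarrow> l x)"
proof (cases "D = {}")
  case False
  define e where "e = from_nat_into D"
  define K where "K = (Pi UNIV (\<lambda>_. {0..1}) :: (nat \<Rightarrow> real) set)"
  have "compactin (product_topology (\<lambda>_. euclidean) UNIV) (PiE UNIV (\<lambda>_. {0..1::real}))"
    by (subst compactin_PiE) auto
  then have "compact K" unfolding K_def by (simp add: euclidean_product_topology PiE_UNIV_domain)
  then have "seq_compact K" by (rule compact_imp_seq_compact)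
  moreover have "(\<lambda>j. u n (e j)) \<in> K" for n using bounds by (auto simp: K_def)
  ultimately obtain l r where "strict_mono r" and lim: "(\<lambda>n. \<lambda>j. u (r n) (e j)) \<longlonglongrightarrow> l"
    by (elim seq_compactE) (auto simp: o_def)
  have "(\<lambda>n. u (r n) (e j)) \<longlonglongrightarrow> l j" for j
    using continuous_on_tendsto_compose[OF continuous_on_product_coordinates lim] by simp
  moreover have "e (SOME j. e j = x) = x" if "x \<in> D" for x
    using from_nat_into_surj[OF \<open>countable D\<close> that] unfolding e_def by (rule someI_ex)
  ultimately have "\<forall>x\<in>D. (\<lambda>n. u (r n) x) \<longlonglongrightarrow> l (SOME j. e j = x)" by metis
  then show ?thesis
    using \<open>strict_mono r\<close> by (intro exI[where x = r] exI[where x = "\<lambda>x. l (SOME j. e j = x)"]) simp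
qed (auto intro: strict_mono_id)

lemma couplings_pointwise_convergent_subseq:
  fixes \<rho> :: "nat \<Rightarrow> ('a \<times> 'b) pmf"
  assumes coupling: "\<And>n. is_coupling (\<rho> n) A B"
  shows "\<exists>r \<pi>. strict_mono r \<and> is_coupling \<pi> A B \<and> (\<forall>x. (\<lambda>n. pmf (\<rho> (r n)) x) \<longlonglongrightarrow> pmf \<pi> x)"
proof -
  let ?D = "set_pmf A \<times> set_pmf B"
  obtain r l where r: "strict_mono r" and lim: "\<forall>x\<in>?D. (\<lambda>n. pmf (\<rho> (r n)) x) \<longlonglongrightarrow> l x"
    using unit_sequence_pointwise_convergent_subseq[of ?D "\<lambda>n. pmf (\<rho> n)"] by (auto simp: pmf_le_1)
  have "set_pmf (\<rho> n) \<subseteq> ?D" for n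
  proof -
    have "set_pmf A = fst ` set_pmf (\<rho> n)" "set_pmf B = snd ` set_pmf (\<rho> n)"
      using coupling[of n] unfolding is_coupling_def by (metis set_map_pmf)+
    then show ?thesis by force
  qed
  then have outside: "pmf (\<rho> n) x = 0" if "x \<notin> ?D" for n x
    using that by (meson pmf_eq_0_set_pmf subsetD)
  define p where "p x = (if x \<in> ?D then l x else 0)" for x
  have lim_p: "(\<lambda>n. pmf ((\<rho> \<circ> r) n) x) \<longlonglongrightarrow> p x" for x
    using lim outside by (cases x) (auto simp: p_def)
  have "is_coupling ((\<rho> \<circ> r) n) A B" for n using coupling by simp
  from coupling_of_pointwise_limit[OF this lim_p]
  obtain \<pi> where "is_coupling \<pi> A B" "\<forall>x. pmf \<pi> x = p x" by blast
  then show ?thesis using r lim_p by (intro exI[of _ r] exI[of _ \<pi>]) simp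
qed

lemma integrable_measure_pmf_bounded:
  fixes f :: "'c \<Rightarrow> real"
  assumes "\<And>x. \<bar>f x\<bar> \<le> c"
  shows "integrable (measure_pmf p) f"
  by (rule measure_pmf.integrable_const_bound[where B = c]) (simp_all add: assms)

lemma abs_summable_pmf_mult_bounded:
  fixes F :: "'c \<Rightarrow> real"
  assumes "\<And>x. \<bar>F x\<bar> \<le> c"
  shows "(\<lambda>x. pmf p x * F x) abs_summable_on UNIV"
proof (rule abs_summable_on_comparison_test'[OF abs_summable_on_cmult_right[OF pmf_abs_summable]])
  show "norm (pmf p x * F x) \<le> c * pmf p x" for x
    using assms[of x] by (simp add: abs_mult mult.commute mult_right_mono)
qed

lemma expectation_le_of_pointwise_limit:
  fixes F :: "'c \<Rightarrow> real"
  assumes lim: "\<And>x. (\<lambda>n. pmf (\<rho> n) x) \<longlonglongrightarrow> pmf \<pi> x"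
    and F: "\<And>x. 0 \<le> F x \<and> F x \<le> 1"
    and lim_expectation: "(\<lambda>n. measure_pmf.expectation (\<rho> n) F) \<longlonglongrightarrow> V"
  shows "V \<le> measure_pmf.expectation \<pi> F"
proof -
  have complement: "infsetsum (\<lambda>x. pmf p x * (1 - F x)) UNIV = 1 - measure_pmf.expectation p F" for p
  proof -
    have "integrable (measure_pmf p) F" using F by (intro integrable_measure_pmf_bounded[where c = 1]) auto
    then have "measure_pmf.expectation p (\<lambda>x. 1 - F x) = 1 - measure_pmf.expectation p F"
      by (simp add: Bochner_Integration.integral_diff)
    then show ?thesis by (simp add: pmf_expectation_eq_infsetsum)
  qed
  have summable: "(\<lambda>x. pmf p x * (1 - F x)) abs_summable_on UNIV" for p
    by (rule abs_summable_pmf_mult_bounded[where c = 1]) (use F in \<open>simp add: abs_le_iff\<close>)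
  have "infsetsum (\<lambda>x. pmf \<pi> x * (1 - F x)) UNIV \<le> 1 - V"
    by (rule infsetsum_le_of_pointwise_limit(2)[where g = "\<lambda>n x. pmf (\<rho> n) x * (1 - F x)"
          and c = "\<lambda>n. 1 - measure_pmf.expectation (\<rho> n) F"])
      (use F lim_expectation in \<open>simp_all add: lim summable tendsto_mult_right tendsto_diff complement\<close>)
  then show ?thesis by (simp add: complement)
qed

lemma optimal_coupling_exists:
  fixes F :: "'a \<times> 'b \<Rightarrow> real"
  assumes F: "\<And>x. 0 \<le> F x \<and> F x \<le> 1"
  shows "\<exists>\<pi>. is_coupling \<pi> A B \<and>
           (\<forall>\<nu>. is_coupling \<nu> A B \<longrightarrow> measure_pmf.expectation \<nu> F \<le> measure_pmf.expectation \<pi> F)"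
proof -
  let ?E = "\<lambda>\<nu>. measure_pmf.expectation \<nu> F" and ?C = "{\<nu>. is_coupling \<nu> A B}"
  have "pair_pmf A B \<in> ?C" by (simp add: is_coupling_def map_fst_pair_pmf map_snd_pair_pmf)
  then have nonempty: "?E ` ?C \<noteq> {}" by blast
  have "?E \<nu> \<le> 1" for \<nu>
    using F by (intro measure_pmf.integral_le_const integrable_measure_pmf_bounded[where c = 1]) auto
  then have bdd: "bdd_above (?E ` ?C)" by (intro bdd_aboveI[where M = 1]) auto
  have "Sup (?E ` ?C) \<in> closure (?E ` ?C)" by (rule closure_contains_Sup[OF nonempty bdd])
  then obtain s where s: "\<And>n. s n \<in> ?E ` ?C" and lim: "s \<longlonglongrightarrow> Sup (?E ` ?C)"
    unfolding closure_sequential by blast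
  then have "\<forall>n. \<exists>\<nu>. is_coupling \<nu> A B \<and> s n = ?E \<nu>" by blast
  then obtain \<rho> where coupling: "\<And>n. is_coupling (\<rho> n) A B" and s_eq: "\<And>n. s n = ?E (\<rho> n)"
    by metis
  obtain r \<pi> where r: "strict_mono r" and \<pi>: "is_coupling \<pi> A B"
    and lim_pmf: "\<And>x. (\<lambda>n. pmf (\<rho> (r n)) x) \<longlonglongrightarrow> pmf \<pi> x"
    using couplings_pointwise_convergent_subseq[of \<rho> A B] coupling by blast
  have "Sup (?E ` ?C) \<le> ?E \<pi>"
    using LIMSEQ_subseq_LIMSEQ[OF lim r] s_eq
    by (intro expectation_le_of_pointwise_limit[OF lim_pmf F]) (simp add: o_def)
  moreover have "?E \<nu> \<le> Sup (?E ` ?C)" if "is_coupling \<nu> A B" for \<nu>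
    using that by (intro cSup_upper bdd) auto
  ultimately show ?thesis using \<pi> by force
qed

lemma infsetsum_add_scaled_diff:
  fixes f g h :: "'c \<Rightarrow> real"
  assumes "f abs_summable_on X" "g abs_summable_on X" "h abs_summable_on X"
  shows "(\<lambda>x. f x + t * (g x - h x)) abs_summable_on X"
    and "infsetsum (\<lambda>x. f x + t * (g x - h x)) X = infsetsum f X + t * (infsetsum g X - infsetsum h X)"
  using assms by (simp_all add: abs_summable_on_add abs_summable_on_diff abs_summable_on_cmult_right
      infsetsum_add infsetsum_diff infsetsum_cmult_right)

lemma coupling_perturbation:
  assumes \<pi>: "is_coupling \<pi> A B" and "t \<ge> 0" and dominated: "\<And>x. t * pmf \<tau> x \<le> pmf \<pi> x"
    and fst: "map_pmf fst \<sigma> = map_pmf fst \<tau>" and snd: "map_pmf snd \<sigma> = map_pmf snd \<tau>"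
  shows "\<exists>\<nu>. is_coupling \<nu> A B \<and> (\<forall>x. pmf \<nu> x = pmf \<pi> x + t * (pmf \<sigma> x - pmf \<tau> x))"
proof -
  define q where "q x = pmf \<pi> x + t * (pmf \<sigma> x - pmf \<tau> x)" for x
  have "q x \<ge> 0" for x
    using dominated[of x] \<open>t \<ge> 0\<close> by (simp add: q_def algebra_simps add_increasing2)
  moreover have "q abs_summable_on UNIV" "infsetsum q UNIV = 1"
    unfolding q_def by (simp_all add: infsetsum_add_scaled_diff pmf_abs_summable infsetsum_pmf_eq_1)
  ultimately have pmf_\<nu>: "pmf (embed_pmf q) x = q x" for x
    by (intro pmf_embed_pmf) (simp_all add: nn_integral_conv_infsetsum)
  have "map_pmf fst (embed_pmf q) = A"
  proof (rule pmf_eqI)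
    fix a
    show "pmf (map_pmf fst (embed_pmf q)) a = pmf A a"
      using \<pi> fst unfolding pmf_map_fst_eq_infsetsum pmf_\<nu> q_def
      by (simp add: infsetsum_add_scaled_diff abs_summable_pmf_Pair_left is_coupling_def
          flip: pmf_map_fst_eq_infsetsum)
  qed
  moreover have "map_pmf snd (embed_pmf q) = B"
  proof (rule pmf_eqI)
    fix b
    show "pmf (map_pmf snd (embed_pmf q)) b = pmf B b"
      using \<pi> snd unfolding pmf_map_snd_eq_infsetsum pmf_\<nu> q_def
      by (simp add: infsetsum_add_scaled_diff abs_summable_pmf_Pair_right is_coupling_def
          flip: pmf_map_snd_eq_infsetsum)
  qed
  ultimately show ?thesis using pmf_\<nu> by (auto simp: is_coupling_def q_def)
qed

text \<open>Optimality is tested against \<open>\<pi> + t (\<sigma> - \<tau>)\<close>, a distribution for small \<open>t > 0\<close>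
  since \<open>\<tau>\<close> has finite support inside that of \<open>\<pi>\<close>.\<close>
lemma optimal_coupling_exchange:
  fixes F :: "'a \<times> 'b \<Rightarrow> real"
  assumes \<pi>: "is_coupling \<pi> A B"
    and optimal: "\<And>\<nu>. is_coupling \<nu> A B \<Longrightarrow> measure_pmf.expectation \<nu> F \<le> measure_pmf.expectation \<pi> F"
    and bounded: "\<And>x. \<bar>F x\<bar> \<le> c"
    and finite: "finite (set_pmf \<tau>)" and support: "set_pmf \<tau> \<subseteq> set_pmf \<pi>"
    and fst: "map_pmf fst \<sigma> = map_pmf fst \<tau>" and snd: "map_pmf snd \<sigma> = map_pmf snd \<tau>"
  shows "measure_pmf.expectation \<sigma> F \<le> measure_pmf.expectation \<tau> F"
proof -
  define t where "t = Min (pmf \<pi> ` set_pmf \<tau>)"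
  have "t > 0"
    using finite support set_pmf_not_empty[of \<tau>] unfolding t_def
    by (subst Min_gr_iff) (auto simp: set_pmf_eq)
  have dominated: "t * pmf \<tau> x \<le> pmf \<pi> x" for x
  proof (cases "x \<in> set_pmf \<tau>")
    case True
    then have "t \<le> pmf \<pi> x" using finite by (simp add: t_def)
    then show ?thesis using \<open>t > 0\<close> pmf_le_1[of \<tau> x] by (smt (verit) mult_left_le pmf_nonneg)
  qed (simp add: set_pmf_eq)
  obtain \<nu> where \<nu>: "is_coupling \<nu> A B" and pmf_\<nu>: "\<And>x. pmf \<nu> x = pmf \<pi> x + t * (pmf \<sigma> x - pmf \<tau> x)"
    using coupling_perturbation[OF \<pi> less_imp_le[OF \<open>t > 0\<close>] dominated fst snd] by blast
  have "measure_pmf.expectation \<nu> F \<le> measure_pmf.expectation \<pi> F" by (rule optimal[OF \<nu>])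
  moreover have "measure_pmf.expectation \<nu> F = measure_pmf.expectation \<pi> F +
      t * (measure_pmf.expectation \<sigma> F - measure_pmf.expectation \<tau> F)"
    using infsetsum_add_scaled_diff(2)[OF abs_summable_pmf_mult_bounded[OF bounded, of \<pi>]
        abs_summable_pmf_mult_bounded[OF bounded, of \<sigma>] abs_summable_pmf_mult_bounded[OF bounded, of \<tau>], where t = t]
    by (simp add: pmf_expectation_eq_infsetsum pmf_\<nu> algebra_simps)
  ultimately show ?thesis using \<open>t > 0\<close> by (simp add: mult_le_0_iff)
qed

lemma map_pmf_of_multiset:
  assumes "M \<noteq> {#}"
  shows "map_pmf f (pmf_of_multiset M) = pmf_of_multiset (image_mset f M)"
proof (rule pmf_eqI)
  fix y
  have "pmf (map_pmf f (pmf_of_multiset M)) y = measure_pmf.prob (pmf_of_multiset M) (f -` {y} \<inter> set_mset M)"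
    using measure_Int_set_pmf[of "pmf_of_multiset M" "f -` {y}"] assms by (simp add: pmf_map)
  also have "\<dots> = (\<Sum>x\<in>f -` {y} \<inter> set_mset M. count M x / size M)"
    using assms by (simp add: measure_measure_pmf_finite)
  also have "\<dots> = pmf (pmf_of_multiset (image_mset f M)) y"
    using assms by (simp add: count_image_mset sum_divide_distrib)
  finally show "pmf (map_pmf f (pmf_of_multiset M)) y = pmf (pmf_of_multiset (image_mset f M)) y" .
qed

lemma sum_list_map_eq_sum_count_list:
  fixes F :: "'c \<Rightarrow> real"
  shows "sum_list (map F xs) = (\<Sum>a\<in>set xs. real (count_list xs a) * F a)"
proof (induction xs)
  case (Cons x xs)
  have "(\<Sum>a\<in>set (x # xs). real (count_list (x # xs) a) * F a) =
      (\<Sum>a\<in>set (x # xs). real (count_list xs a) * F a + (if a = x then F a else 0))"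
    by (intro sum.cong) (auto simp: distrib_right)
  also have "\<dots> = (\<Sum>a\<in>set (x # xs). real (count_list xs a) * F a) + F x"
    by (simp add: sum.distrib)
  also have "(\<Sum>a\<in>set (x # xs). real (count_list xs a) * F a) = (\<Sum>a\<in>set xs. real (count_list xs a) * F a)"
    by (rule sum.mono_neutral_right) (auto simp: count_list_0_iff)
  finally show ?case using Cons by simp
qed simp

lemma expectation_pmf_of_multiset_mset:
  fixes F :: "'c \<Rightarrow> real"
  assumes "xs \<noteq> []"
  shows "measure_pmf.expectation (pmf_of_multiset (mset xs)) F = sum_list (map F xs) / length xs"
  using assms
  by (subst integral_measure_pmf_real[where A = "set xs"])
    (auto simp: sum_list_map_eq_sum_count_list sum_divide_distrib count_mset mult.commute)

lemma mset_rotate1: "mset (rotate1 xs) = mset xs"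
  by (cases xs) simp_all

text \<open>\<open>rotate1\<close> re-matches each \<open>a\<^sub>i\<close> with \<open>b\<^sub>i\<^sub>+\<^sub>1\<close>, indices taken cyclically.\<close>
definition cyclically_monotone :: "('a \<Rightarrow> 'b \<Rightarrow> real) \<Rightarrow> ('a \<times> 'b) set \<Rightarrow> bool" where
  "cyclically_monotone f \<Gamma> \<longleftrightarrow> (\<forall>ps. set ps \<subseteq> \<Gamma> \<longrightarrow>
     sum_list (map (case_prod f) (zip (map fst ps) (rotate1 (map snd ps)))) \<le> sum_list (map (case_prod f) ps))"

lemma optimal_coupling_cyclically_monotone:
  assumes \<pi>: "is_coupling \<pi> A B"
    and optimal: "\<And>\<nu>. is_coupling \<nu> A B \<Longrightarrow>
      measure_pmf.expectation \<nu> (case_prod f) \<le> measure_pmf.expectation \<pi> (case_prod f)"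
    and bounded: "\<And>x y. \<bar>f x y\<bar> \<le> c"
  shows "cyclically_monotone f (set_pmf \<pi>)"
  unfolding cyclically_monotone_def
proof (intro allI impI)
  fix ps :: "('a \<times> 'b) list"
  assume ps: "set ps \<subseteq> set_pmf \<pi>"
  define qs where "qs = zip (map fst ps) (rotate1 (map snd ps))"
  show "sum_list (map (case_prod f) qs) \<le> sum_list (map (case_prod f) ps)"
  proof (cases "ps = []")
    case False
    then have "qs \<noteq> []" and length: "length qs = length ps" by (simp_all add: qs_def)
    have "map fst qs = map fst ps" "map snd qs = rotate1 (map snd ps)"
      by (simp_all add: qs_def)
    then have "map_pmf fst (pmf_of_multiset (mset qs)) = map_pmf fst (pmf_of_multiset (mset ps))"
      and "map_pmf snd (pmf_of_multiset (mset qs)) = map_pmf snd (pmf_of_multiset (mset ps))"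
      using \<open>ps \<noteq> []\<close> \<open>qs \<noteq> []\<close> by (simp_all add: map_pmf_of_multiset mset_rotate1 flip: mset_map)
    then have "measure_pmf.expectation (pmf_of_multiset (mset qs)) (case_prod f) \<le>
        measure_pmf.expectation (pmf_of_multiset (mset ps)) (case_prod f)"
      using \<open>ps \<noteq> []\<close> ps bounded
      by (intro optimal_coupling_exchange[OF \<pi> optimal, where c = c]) auto
    then show ?thesis
      using \<open>ps \<noteq> []\<close> \<open>qs \<noteq> []\<close> length
      by (simp add: expectation_pmf_of_multiset_mset divide_right_mono_neg divide_le_cancel)
  qed (simp add: qs_def)
qed

text \<open>Gain of moving along the chain \<open>x \<rightarrow> (a\<^sub>n, b\<^sub>n) \<rightarrow> \<dots> \<rightarrow> (a\<^sub>1, b\<^sub>1) \<rightarrow> (a\<^sub>0, b\<^sub>0)\<close>,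
  where each step re-matches \<open>b\<^sub>i\<close> to the previous first coordinate; the supremum over all chains
  is Rockafellar's potential.\<close>
fun chain_gain :: "('a \<Rightarrow> 'b \<Rightarrow> real) \<Rightarrow> 'a \<times> 'b \<Rightarrow> 'a \<Rightarrow> ('a \<times> 'b) list \<Rightarrow> real" where
  "chain_gain f (a0, b0) x [] = f x b0 - f a0 b0"
| "chain_gain f p0 x ((a, b) # ps) = f x b - f a b + chain_gain f p0 a ps"

lemma chain_gain_eq:
  "chain_gain f (a0, b0) x ps = sum_list (map (case_prod f) (zip (x # map fst ps) (map snd ps @ [b0])))
     - sum_list (map (case_prod f) ((a0, b0) # ps))"
  by (induction ps arbitrary: x) auto

lemma cyclically_monotone_chain_gain_nonpos:
  assumes "cyclically_monotone f \<Gamma>" "set ((a0, b0) # ps) \<subseteq> \<Gamma>"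
  shows "chain_gain f (a0, b0) a0 ps \<le> 0"
  using assms unfolding cyclically_monotone_def chain_gain_eq
  by (auto dest!: spec[of _ "(a0, b0) # ps"])

lemma chain_gain_diff: "\<exists>b. chain_gain f p0 x ps - chain_gain f p0 y ps = f x b - f y b"
  by (cases p0; cases ps) auto

lemma cyclically_monotone_potential:
  assumes mono: "cyclically_monotone f \<Gamma>" and p0: "(a0, b0) \<in> \<Gamma>"
    and f: "\<And>x y. 0 \<le> f x y \<and> f x y \<le> 1"
  shows "\<exists>g. (\<forall>x. \<bar>g x\<bar> \<le> 1) \<and> (\<forall>(a, b)\<in>\<Gamma>. \<forall>x. f x b - f a b \<le> g x - g a)"
proof -
  define W where "W x = {chain_gain f (a0, b0) x ps | ps. set ps \<subseteq> \<Gamma>}" for x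
  define g where "g x = Sup (W x)" for x
  have W_le: "w \<le> 1" if w: "w \<in> W x" for w x
  proof -
    obtain ps where ps: "set ps \<subseteq> \<Gamma>" "w = chain_gain f (a0, b0) x ps" using w by (auto simp: W_def)
    obtain b where "w - chain_gain f (a0, b0) a0 ps = f x b - f a0 b"
      using chain_gain_diff[of f "(a0, b0)" x ps a0] ps(2) by blast
    then show ?thesis
      using cyclically_monotone_chain_gain_nonpos[OF mono, of a0 b0 ps] ps p0 f[of x b] f[of a0 b] by simp
  qed
  have W_nonempty: "chain_gain f (a0, b0) x [] \<in> W x" for x
    unfolding W_def by (intro CollectI exI[of _ "[]"]) simp
  have bdd: "bdd_above (W x)" for x using W_le by (intro bdd_aboveI) blast
  have "\<bar>g x\<bar> \<le> 1" for x
  proof -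
    have "chain_gain f (a0, b0) x [] \<le> g x" unfolding g_def by (intro cSup_upper W_nonempty bdd)
    moreover have "g x \<le> 1" unfolding g_def using W_nonempty by (intro cSup_least W_le) auto
    ultimately show ?thesis using f[of x b0] f[of a0 b0] by (simp add: abs_le_iff)
  qed
  moreover have "f x b - f a b \<le> g x - g a" if "(a, b) \<in> \<Gamma>" for a b x
  proof -
    have "w \<le> g x - f x b + f a b" if "w \<in> W a" for w
    proof -
      obtain ps where ps: "set ps \<subseteq> \<Gamma>" "w = chain_gain f (a0, b0) a ps" using \<open>w \<in> W a\<close> by (auto simp: W_def)
      have "chain_gain f (a0, b0) x ((a, b) # ps) \<in> W x"
        using ps \<open>(a, b) \<in> \<Gamma>\<close> unfolding W_def by (intro CollectI exI[of _ "(a, b) # ps"]) auto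
      then have "chain_gain f (a0, b0) x ((a, b) # ps) \<le> g x" unfolding g_def by (intro cSup_upper bdd)
      then show ?thesis using ps by simp
    qed
    then have "g a \<le> g x - f x b + f a b" unfolding g_def[of a] using W_nonempty by (intro cSup_least) auto
    then show ?thesis by simp
  qed
  ultimately show ?thesis by blast
qed

lemma conjugate_potential:
  fixes f :: "'a \<Rightarrow> 'b \<Rightarrow> real"
  assumes f: "\<And>x y. 0 \<le> f x y \<and> f x y \<le> 1" and g: "\<And>x. \<bar>g x\<bar> \<le> M"
    and h: "\<And>y. h y = (SUP x. f x y - g x)"
  shows "f x y \<le> g x + h y" and "h y \<le> h y' + 1" and "\<bar>h y\<bar> \<le> M + 1"
proof -
  have bdd: "bdd_above (range (\<lambda>x. f x y - g x))" for y
    using f g by (intro bdd_aboveI2[where M = "1 + M"]) (smt (verit))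
  have le: "f x y \<le> g x + h y" for x y
    using cSUP_upper[OF UNIV_I bdd, of x y] by (simp add: h)
  then show "f x y \<le> g x + h y" .
  show "h y \<le> h y' + 1"
    unfolding h[of y]
  proof (rule cSUP_least)
    show "f x y - g x \<le> h y' + 1" for x using le[of x y'] f[of x y] f[of x y'] by linarith
  qed simp
  have "h y \<le> M + 1"
    unfolding h
  proof (rule cSUP_least)
    show "f x y - g x \<le> M + 1" for x using f[of x y] g[of x] by (simp add: abs_le_iff)
  qed simp
  moreover have "- M \<le> h y" using le[of undefined y] f[of undefined y] g[of undefined] by (simp add: abs_le_iff)
  ultimately show "\<bar>h y\<bar> \<le> M + 1" by (simp add: abs_le_iff)
qed

lemma interval_of_oscillation_le:
  fixes G :: "'c \<Rightarrow> real"
  assumes osc: "\<And>x x'. G x \<le> G x' + 1"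
  shows "\<exists>c. \<forall>x. G x \<in> {c..c + 1}"
proof (intro exI allI)
  fix x
  have "bdd_below (range G)" using osc by (intro bdd_belowI[where m = "G undefined - 1"]) (force simp: algebra_simps)
  then have "(INF x. G x) \<le> G x" by (rule cINF_lower) simp
  moreover have "G x - 1 \<le> (INF x. G x)" by (rule cINF_greatest) (use osc in \<open>auto simp: algebra_simps\<close>)
  ultimately show "G x \<in> {(INF x. G x)..(INF x. G x) + 1}" by simp
qed

lemma expectation_potentials_le_coupling:
  fixes g :: "'a \<Rightarrow> real" and h :: "'b \<Rightarrow> real"
  assumes \<pi>: "is_coupling \<pi> A B"
    and bounded: "\<And>x. \<bar>g x\<bar> \<le> M" "\<And>y. \<bar>h y\<bar> \<le> M" "\<And>x y. \<bar>f x y\<bar> \<le> M"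
    and le: "\<And>a b. (a, b) \<in> set_pmf \<pi> \<Longrightarrow> g a + h b \<le> f a b"
  shows "measure_pmf.expectation A g + measure_pmf.expectation B h \<le> measure_pmf.expectation \<pi> (case_prod f)"
proof -
  have integrable: "integrable (measure_pmf \<pi>) (\<lambda>x. g (fst x))" "integrable (measure_pmf \<pi>) (\<lambda>x. h (snd x))"
    "integrable (measure_pmf \<pi>) (case_prod f)"
    by (auto intro!: integrable_measure_pmf_bounded[where c = M] simp: bounded split: prod.split)
  have "measure_pmf.expectation A g + measure_pmf.expectation B h =
      measure_pmf.expectation \<pi> (\<lambda>x. g (fst x) + h (snd x))"
    using \<pi> integrable by (auto simp: is_coupling_def)
  also have "\<dots> \<le> measure_pmf.expectation \<pi> (case_prod f)"
    using le by (intro integral_mono_AE AE_pmfI) (auto simp: integrable)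
  finally show ?thesis .
qed

lemma optimal_coupling_dual_potentials:
  fixes f :: "'a \<Rightarrow> 'b \<Rightarrow> real"
  assumes \<pi>: "is_coupling \<pi> A B"
    and optimal: "\<And>\<nu>. is_coupling \<nu> A B \<Longrightarrow>
      measure_pmf.expectation \<nu> (case_prod f) \<le> measure_pmf.expectation \<pi> (case_prod f)"
    and f: "\<And>x y. 0 \<le> f x y \<and> f x y \<le> 1"
  shows "\<exists>G H c d. (\<forall>x y. f x y \<le> G x + H y) \<and> (\<forall>x. G x \<in> {c..c + 1}) \<and> (\<forall>y. H y \<in> {d..d + 1}) \<and>
           measure_pmf.expectation A G + measure_pmf.expectation B H \<le> measure_pmf.expectation \<pi> (case_prod f)"
proof -
  obtain a0 b0 where p0: "(a0, b0) \<in> set_pmf \<pi>" using set_pmf_not_empty[of \<pi>] by fast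
  have "cyclically_monotone f (set_pmf \<pi>)"
    using f by (intro optimal_coupling_cyclically_monotone[OF \<pi> optimal, where c = 1]) (simp_all add: abs_le_iff)
  then obtain g where g: "\<And>x. \<bar>g x\<bar> \<le> 1"
    and potential: "\<And>a b x. (a, b) \<in> set_pmf \<pi> \<Longrightarrow> f x b - f a b \<le> g x - g a"
    using cyclically_monotone_potential[where f = f, OF _ p0 f] by fastforce
  define H where "H y = (SUP x. f x y - g x)" for y
  define G where "G x = (SUP y. f x y - H y)" for x
  have H: "f x y \<le> g x + H y" "H y \<le> H y' + 1" "\<bar>H y\<bar> \<le> 2" for x y y'
    using conjugate_potential[OF f g H_def] by simp_all
  have G: "f x y \<le> H y + G x" "G x \<le> G x' + 1" "\<bar>G x\<bar> \<le> 3" for x x' y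
    using conjugate_potential[of "\<lambda>y x. f x y" H 2 G, OF f H(3) G_def] by simp_all
  have G_le_g: "G x \<le> g x" for x unfolding G_def using H(1) by (intro cSUP_least) (force simp: algebra_simps)+
  have on_support: "g a + H b \<le> f a b" if "(a, b) \<in> set_pmf \<pi>" for a b
  proof -
    have "H b \<le> f a b - g a" unfolding H_def
    proof (rule cSUP_least)
      show "f x b - g x \<le> f a b - g a" for x using potential[OF that, of x] by simp
    qed simp
    then show ?thesis by simp
  qed
  have "measure_pmf.expectation A G \<le> measure_pmf.expectation A g"
    using G_le_g by (intro integral_mono integrable_measure_pmf_bounded[OF G(3)] integrable_measure_pmf_bounded[OF g])
  then have "measure_pmf.expectation A G + measure_pmf.expectation B H
      \<le> measure_pmf.expectation A g + measure_pmf.expectation B H" by simp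
  also have "\<dots> \<le> measure_pmf.expectation \<pi> (case_prod f)"
  proof (rule expectation_potentials_le_coupling[OF \<pi> _ H(3) _ on_support])
    show "\<bar>g x\<bar> \<le> 2" for x using g[of x] by simp
    show "\<bar>f x y\<bar> \<le> 2" for x y using f[of x y] by simp
  qed
  finally have "measure_pmf.expectation A G + measure_pmf.expectation B H \<le> measure_pmf.expectation \<pi> (case_prod f)" .
  moreover obtain c where "\<forall>x. G x \<in> {c..c + 1}" using interval_of_oscillation_le[of G] G(2) by blast
  moreover obtain d where "\<forall>y. H y \<in> {d..d + 1}" using interval_of_oscillation_le[of H] H(2) by blast
  ultimately show ?thesis
    using G(1) by (intro exI[of _ G] exI[of _ H] exI[of _ c] exI[of _ d]) (simp add: add.commute)
qed

lemma Hoeffding_mgf_pmf: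
  fixes G :: "'c \<Rightarrow> real"
  assumes G: "\<And>x. G x \<in> {a..b}" and "l > 0"
  shows "measure_pmf.expectation A (\<lambda>x. exp (l * (G x - measure_pmf.expectation A G)))
           \<le> exp (l\<^sup>2 * (b - a)\<^sup>2 / 8)"
proof -
  interpret interval_bounded_random_variable "measure_pmf A" G a b
  proof unfold_locales
    show "AE x in measure_pmf A. G x \<in> {a..b}" using G by simp
  qed simp
  show ?thesis
    by (rule integral_real_bounded) (use Hoeffdings_lemma_nn_integral[OF \<open>l > 0\<close>] in simp_all)
qed

lemma Hoeffding_mgf_Pi_pmf:
  fixes G :: "'c \<Rightarrow> real" and a b l :: real
  assumes "finite I" and G: "\<And>x. G x \<in> {a..b}" and "l > 0"
  shows "measure_pmf.expectation (Pi_pmf I dflt (\<lambda>_. A))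
           (\<lambda>xs. exp (l * (\<Sum>i\<in>I. G (xs i) - measure_pmf.expectation A G)))
         \<le> exp (card I * l\<^sup>2 * (b - a)\<^sup>2 / 8)"
proof -
  let ?m = "measure_pmf.expectation A G"
  have "integrable (measure_pmf A) (\<lambda>x. exp (l * (G x - ?m)))"
  proof (rule integrable_measure_pmf_bounded)
    show "\<bar>exp (l * (G x - ?m))\<bar> \<le> exp (l * (b - ?m))" for x
      using G[of x] \<open>l > 0\<close> by (simp add: mult_left_mono)
  qed
  then have "measure_pmf.expectation (Pi_pmf I dflt (\<lambda>_. A)) (\<lambda>xs. \<Prod>i\<in>I. exp (l * (G (xs i) - ?m)))
      = (\<Prod>i\<in>I. measure_pmf.expectation A (\<lambda>x. exp (l * (G x - ?m))))"
    using \<open>finite I\<close> by (subst expectation_prod_Pi_pmf) simp_all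
  also have "\<dots> \<le> (\<Prod>i\<in>I. exp (l\<^sup>2 * (b - a)\<^sup>2 / 8))"
    using G \<open>l > 0\<close> by (intro prod_mono conjI integral_nonneg_AE Hoeffding_mgf_pmf) auto
  finally show ?thesis
    using \<open>finite I\<close> by (simp add: sum_distrib_left exp_sum exp_of_nat_mult[symmetric] mult.assoc)
qed

lemma exp_add_le_mean_exp_double:
  fixes x y :: real
  shows "exp (x + y) \<le> (exp (2 * x) + exp (2 * y)) / 2"
proof -
  have "exp (2 * z) = exp z * exp z" for z :: real by (metis exp_add mult_2)
  then show ?thesis
    using sum_squares_bound[of "exp x" "exp y"] by (simp add: exp_add power2_eq_square)
qed

lemma coupling_sum_tail_le:
  fixes X :: "'c \<Rightarrow> real" and Y :: "'d \<Rightarrow> real"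
  assumes \<mu>: "is_coupling \<mu> P Q" and X: "\<And>x. \<bar>X x\<bar> \<le> M" and Y: "\<And>y. \<bar>Y y\<bar> \<le> M" and "l \<ge> 0"
  shows "measure_pmf.prob \<mu> {(x, y). X x + Y y \<ge> T}
           \<le> exp (- l * T) / 2 * (measure_pmf.expectation P (\<lambda>x. exp (2 * l * X x))
                                   + measure_pmf.expectation Q (\<lambda>y. exp (2 * l * Y y)))"
proof -
  let ?E = "{(x, y). X x + Y y \<ge> T}"
  define \<Phi> where "\<Phi> z = exp (- l * T) / 2 * (exp (2 * l * X (fst z)) + exp (2 * l * Y (snd z)))" for z
  have exp_bounded: "\<bar>exp (2 * l * Z)\<bar> \<le> exp (2 * l * M)" if "\<bar>Z\<bar> \<le> M" for Z
    using that \<open>l \<ge> 0\<close> by (simp add: mult_left_mono)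
  have integrable: "integrable (measure_pmf \<mu>) (\<lambda>z. exp (2 * l * X (fst z)))"
    "integrable (measure_pmf \<mu>) (\<lambda>z. exp (2 * l * Y (snd z)))"
    by (rule integrable_measure_pmf_bounded, rule exp_bounded, rule X)
      (rule integrable_measure_pmf_bounded, rule exp_bounded, rule Y)
  have marginals: "measure_pmf.expectation P h = measure_pmf.expectation \<mu> (\<lambda>z. h (fst z))"
    "measure_pmf.expectation Q h' = measure_pmf.expectation \<mu> (\<lambda>z. h' (snd z))"
    for h :: "'c \<Rightarrow> real" and h' :: "'d \<Rightarrow> real"
    using \<mu> by (auto simp: is_coupling_def)
  have "indicator ?E z \<le> \<Phi> z" for z
  proof (cases "z \<in> ?E")
    case True
    then have "l * T \<le> l * (X (fst z) + Y (snd z))"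
      using \<open>l \<ge> 0\<close> by (intro mult_left_mono) (auto simp: case_prod_beta)
    then have "1 \<le> exp (l * (X (fst z) + Y (snd z)) - l * T)" by simp
    also have "\<dots> = exp (- l * T) * exp (l * X (fst z) + l * Y (snd z))"
      by (subst exp_add[symmetric]) (simp add: algebra_simps)
    also have "\<dots> \<le> \<Phi> z"
      unfolding \<Phi>_def using exp_add_le_mean_exp_double[of "l * X (fst z)" "l * Y (snd z)"]
      by (simp add: mult.assoc)
    finally show ?thesis using True by simp
  qed (simp add: \<Phi>_def)
  then have "measure_pmf.expectation \<mu> (indicator ?E) \<le> measure_pmf.expectation \<mu> \<Phi>"
    unfolding \<Phi>_def
    by (intro integral_mono Bochner_Integration.integrable_mult_right Bochner_Integration.integrable_add
        integrable integrable_measure_pmf_bounded[where c = 1]) auto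
  also have "\<dots> = exp (- l * T) / 2 * (measure_pmf.expectation P (\<lambda>x. exp (2 * l * X x))
                                       + measure_pmf.expectation Q (\<lambda>y. exp (2 * l * Y y)))"
    unfolding \<Phi>_def marginals using integrable by simp
  finally show ?thesis by simp
qed

lemma expectation_pmf_mem_interval:
  fixes G :: "'c \<Rightarrow> real"
  assumes G: "\<And>x. G x \<in> {a..b}"
  shows "measure_pmf.expectation A G \<in> {a..b}"
proof -
  have "integrable (measure_pmf A) G"
    by (rule integrable_measure_pmf_bounded[where c = "\<bar>a\<bar> + \<bar>b\<bar>"]) (smt (verit) G atLeastAtMost_iff)
  then show ?thesis
    using G by (auto intro: measure_pmf.integral_ge_const measure_pmf.integral_le_const)
qed

lemma coupled_sums_tail_bound:
  fixes G :: "'a \<Rightarrow> real" and H :: "'b \<Rightarrow> real"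
  assumes \<mu>: "is_coupling \<mu> (Pi_pmf I dflt (\<lambda>_. A)) (Pi_pmf I dflt' (\<lambda>_. B))"
    and I: "finite I" "I \<noteq> {}"
    and G: "\<And>x. G x \<in> {c..c + 1}" and H: "\<And>y. H y \<in> {d..d + 1}" and "T > 0"
  shows "measure_pmf.prob \<mu> {(xs, ys). (\<Sum>i\<in>I. G (xs i) + H (ys i))
             \<ge> card I * (measure_pmf.expectation A G + measure_pmf.expectation B H) + T}
           \<le> exp (- T\<^sup>2 / (2 * real (card I)))"
proof -
  let ?n = "real (card I)" and ?mG = "measure_pmf.expectation A G" and ?mH = "measure_pmf.expectation B H"
  define X where "X xs = (\<Sum>i\<in>I. G (xs i) - ?mG)" for xs
  define Y where "Y ys = (\<Sum>i\<in>I. H (ys i) - ?mH)" for ys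
  define l where "l = T / ?n"
  have "?n > 0" using I by (simp add: card_gt_0_iff)
  then have "l > 0" using \<open>T > 0\<close> by (simp add: l_def)
  have "\<bar>X xs\<bar> \<le> ?n" for xs
  proof -
    have deviation: "\<bar>G x - ?mG\<bar> \<le> 1" for x
      using G[of x] expectation_pmf_mem_interval[of G _ _ A, OF G] by (simp add: abs_le_iff)
    have "\<bar>X xs\<bar> \<le> (\<Sum>i\<in>I. \<bar>G (xs i) - ?mG\<bar>)" unfolding X_def by (rule sum_abs)
    also have "\<dots> \<le> ?n" using sum_mono[of I _ "\<lambda>_. 1", OF deviation] by simp
    finally show ?thesis .
  qed
  moreover have "\<bar>Y ys\<bar> \<le> ?n" for ys
  proof -
    have deviation: "\<bar>H y - ?mH\<bar> \<le> 1" for y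
      using H[of y] expectation_pmf_mem_interval[of H _ _ B, OF H] by (simp add: abs_le_iff)
    have "\<bar>Y ys\<bar> \<le> (\<Sum>i\<in>I. \<bar>H (ys i) - ?mH\<bar>)" unfolding Y_def by (rule sum_abs)
    also have "\<dots> \<le> ?n" using sum_mono[of I _ "\<lambda>_. 1", OF deviation] by simp
    finally show ?thesis .
  qed
  moreover have "{(xs, ys). (\<Sum>i\<in>I. G (xs i) + H (ys i)) \<ge> ?n * (?mG + ?mH) + T} = {(xs, ys). X xs + Y ys \<ge> T}"
    by (auto simp: X_def Y_def sum.distrib sum_subtractf algebra_simps)
  ultimately have "measure_pmf.prob \<mu> {(xs, ys). (\<Sum>i\<in>I. G (xs i) + H (ys i)) \<ge> ?n * (?mG + ?mH) + T}
      \<le> exp (- l * T) / 2 * (measure_pmf.expectation (Pi_pmf I dflt (\<lambda>_. A)) (\<lambda>xs. exp (2 * l * X xs))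
                            + measure_pmf.expectation (Pi_pmf I dflt' (\<lambda>_. B)) (\<lambda>ys. exp (2 * l * Y ys)))"
    using coupling_sum_tail_le[OF \<mu>, of X ?n Y l T] \<open>l > 0\<close> by simp
  also have "\<dots> \<le> exp (- l * T) / 2 * (exp (?n * (2 * l)\<^sup>2 / 8) + exp (?n * (2 * l)\<^sup>2 / 8))"
    using Hoeffding_mgf_Pi_pmf[OF I(1) G, of "2 * l"] Hoeffding_mgf_Pi_pmf[OF I(1) H, of "2 * l"] \<open>l > 0\<close>
    by (intro mult_left_mono add_mono) (simp_all add: X_def Y_def)
  also have "\<dots> = exp (- T\<^sup>2 / (2 * ?n))"
    using \<open>?n > 0\<close> by (simp add: l_def flip: exp_add) (simp add: power2_eq_square field_simps)
  finally show ?thesis .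
qed

lemma coupled_sum_tail_less:
  fixes f :: "'a \<Rightarrow> 'b \<Rightarrow> real"
  assumes \<mu>: "is_coupling \<mu> (Pi_pmf {..<k} dflt (\<lambda>_. A)) (Pi_pmf {..<k} dflt' (\<lambda>_. B))"
    and "k \<ge> 1" and "\<delta> > 0"
    and dominates: "\<And>x y. f x y \<le> G x + H y"
    and G: "\<And>x. G x \<in> {c..c + 1}" and H: "\<And>y. H y \<in> {d..d + 1}"
    and gap: "measure_pmf.expectation A G + measure_pmf.expectation B H < \<epsilon>"
  shows "measure_pmf.prob \<mu> {(as, bs). (\<Sum>i<k. f (as i) (bs i)) \<ge> \<epsilon> * real k + sqrt (2 * real k * ln (1 / \<delta>))}
           < \<delta>"
proof (cases "\<delta> \<le> 1")
  case True
  define s where "s = sqrt (2 * real k * ln (1 / \<delta>))"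
  define T where "T = s + real k * (\<epsilon> - (measure_pmf.expectation A G + measure_pmf.expectation B H))"
  have "s \<ge> 0" and s_squared: "s\<^sup>2 = 2 * real k * ln (1 / \<delta>)"
    using True \<open>\<delta> > 0\<close> by (simp_all add: s_def)
  have "s < T" using gap \<open>k \<ge> 1\<close> by (simp add: T_def)
  let ?bound = "real (card {..<k}) * (measure_pmf.expectation A G + measure_pmf.expectation B H) + T"
  have "measure_pmf.prob \<mu> {(as, bs). (\<Sum>i<k. f (as i) (bs i)) \<ge> \<epsilon> * real k + s}
      \<le> measure_pmf.prob \<mu> {(as, bs). (\<Sum>i<k. G (as i) + H (bs i)) \<ge> ?bound}"
  proof (rule measure_pmf.finite_measure_mono, safe)
    fix as bs assume "\<epsilon> * real k + s \<le> (\<Sum>i<k. f (as i) (bs i))"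
    moreover have "(\<Sum>i<k. f (as i) (bs i)) \<le> (\<Sum>i<k. G (as i) + H (bs i))" by (intro sum_mono dominates)
    ultimately show "?bound \<le> (\<Sum>i<k. G (as i) + H (bs i))" by (simp add: T_def algebra_simps)
  qed simp
  also have "\<dots> \<le> exp (- T\<^sup>2 / (2 * real (card {..<k})))"
    by (rule coupled_sums_tail_bound[OF \<mu>]) (use G H \<open>s < T\<close> \<open>s \<ge> 0\<close> \<open>k \<ge> 1\<close> in \<open>auto simp: lessThan_empty_iff\<close>)
  also have "\<dots> < exp (- s\<^sup>2 / (2 * real k))"
    using \<open>s < T\<close> \<open>s \<ge> 0\<close> \<open>k \<ge> 1\<close> by (simp add: divide_strict_right_mono power_strict_mono)
  also have "\<dots> = \<delta>" using s_squared \<open>k \<ge> 1\<close> \<open>\<delta> > 0\<close> by (simp add: ln_div)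
  finally show ?thesis by (simp add: s_def)
next
  case False
  then show ?thesis using measure_pmf.prob_le_1[of \<mu>] by (meson le_less_trans not_le)
qed

theorem lemma5p3:
  fixes \<epsilon> \<delta> :: real and k :: nat
    and A :: "'a pmf" and B :: "'b pmf" and f :: "'a \<Rightarrow> 'b \<Rightarrow> real"
  assumes "\<epsilon> > 0" and "\<delta> > 0" and "k \<ge> 1"
    and "\<And>a b. 0 \<le> f a b \<and> f a b \<le> 1"
    and "\<exists>\<mu> :: ((nat \<Rightarrow> 'a) \<times> (nat \<Rightarrow> 'b)) pmf.
           is_coupling \<mu> (Pi_pmf {..<k} undefined (\<lambda>_. A)) (Pi_pmf {..<k} undefined (\<lambda>_. B)) \<and>
           measure_pmf.prob \<mu>
             {(as, bs). (\<Sum>i<k. f (as i) (bs i)) \<ge> \<epsilon> * real k + sqrt (2 * real k * ln (1 / \<delta>))}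
             \<ge> \<delta>"
  shows "\<exists>\<nu> :: ('a \<times> 'b) pmf. is_coupling \<nu> A B \<and>
           measure_pmf.expectation \<nu> (\<lambda>(a, b). f a b) \<ge> \<epsilon>"
proof (rule ccontr)
  assume no_coupling: "\<not> ?thesis"
  obtain \<pi> where \<pi>: "is_coupling \<pi> A B" and optimal: "\<And>\<nu>. is_coupling \<nu> A B \<Longrightarrow>
      measure_pmf.expectation \<nu> (case_prod f) \<le> measure_pmf.expectation \<pi> (case_prod f)"
    using optimal_coupling_exists[of "case_prod f" A B] assms(4) by fastforce
  obtain G H c d where dominates: "\<And>x y. f x y \<le> G x + H y"
    and G: "\<And>x. G x \<in> {c..c + 1}" and H: "\<And>y. H y \<in> {d..d + 1}"
    and dual: "measure_pmf.expectation A G + measure_pmf.expectation B H \<le> measure_pmf.expectation \<pi> (case_prod f)"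
    using optimal_coupling_dual_potentials[OF \<pi> optimal assms(4)] by blast
  have gap: "measure_pmf.expectation A G + measure_pmf.expectation B H < \<epsilon>"
    using dual no_coupling \<pi> by fastforce
  obtain \<mu> where \<mu>: "is_coupling \<mu> (Pi_pmf {..<k} undefined (\<lambda>_. A)) (Pi_pmf {..<k} undefined (\<lambda>_. B))"
    and "measure_pmf.prob \<mu>
           {(as, bs). (\<Sum>i<k. f (as i) (bs i)) \<ge> \<epsilon> * real k + sqrt (2 * real k * ln (1 / \<delta>))} \<ge> \<delta>"
    using assms(5) by blast
  with coupled_sum_tail_less[OF \<mu> assms(3,2) dominates G H gap] show False by simp
qed

end
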